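(* Let $\mathfrak g_1,\mathfrak g_2$ be vector spaces and $\mathcal G=\mathfrak g_1\oplus\mathfrak g_2$. There is a one-to-one correspondence between matched pairs of Lie triple systems $(\mathfrak g_1,\mathfrak g_2;\rho_1,\rho_2)$ and strict twilled Lie triple system structures on $\mathcal G$ (with respect to $\mathfrak g_1,\mathfrak g_2$). It sends a matched pair to $\mathcal G$ with the bracket $$[x+u,y+v,z+w]_{\bowtie}=[x,y,z]_{\mathfrak g_1}+D_2(u,v)z+\rho_2(v,w)x-\rho_2(u,w)y+[u,v,w]_{\mathfrak g_2}+D_1(x,y)w+\rho_1(y,z)u-\rho_1(x,z)v,$$ and conversely sends a strict twilled Lie triple system $(\mathcal G,[\cdot,\cdot,\cdot]_{\mathcal G})$ to the restricted brackets on $\mathfrak g_1,\mathfrak g_2$ together with $\rho_1(x,y)u=[u,x,y]_2$ and $\rho_2(u,v)x=[x,u,v]_1$ ($x,y,z\in\mathfrak g_1$, $u,v,w\in\mathfrak g_2$).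
   Context: All vector spaces are over a field of characteristic $0$. A Lie triple system is a vector space with a trilinear bracket $[\cdot,\cdot,\cdot]$ satisfying $[x,x,y]=0$, $[x,y,z]+[y,z,x]+[z,x,y]=0$ and $[x,y,[z,w,t]]=[[x,y,z],w,t]+[z,[x,y,w],t]+[z,w,[x,y,t]]$. A representation of a Lie triple system $\mathfrak g$ on $V$ is a bilinear $\rho:\otimes^2\mathfrak g\to\mathfrak{gl}(V)$ with $D(x,y):=\rho(y,x)-\rho(x,y)$ such that $\rho(z,w)\rho(x,y)-\rho(y,w)\rho(x,z)-\rho(x,[y,z,w])+D(y,z)\rho(x,w)=0$ and $\rho([x,y,z],w)+\rho(z,[x,y,w])=[D(x,y),\rho(z,w)]$. A matched pair $(\mathfrak g_1,\mathfrak g_2;\rho_1,\rho_2)$ consists of Lie triple systems $(\mathfrak g_1,[\cdot,\cdot,\cdot]_{\mathfrak g_1})$, $(\mathfrak g_2,[\cdot,\cdot,\cdot]_{\mathfrak g_2})$, a representation $\rho_1$ of $\mathfrak g_1$ on $\mathfrak g_2$ and a representation $\rho_2$ of $\mathfrak g_2$ on $\mathfrak g_1$, with $D_1(x,y)=\rho_1(y,x)-\rho_1(x,y)$, $D_2(u,v)=\rho_2(v,u)-\rho_2(u,v)$, such that for all $x,y,z\in\mathfrak g_1$, $u,v,w\in\mathfrak g_2$: $\rho_2(u,v)[x,y,z]_{\mathfrak g_1}=[x,y,\rho_2(u,v)z]_{\mathfrak g_1}-\rho_2(D_1(x,y)u,v)z-\rho_2(u,D_1(x,y)v)z$; $[x,y,\rho_2(u,v)z]_{\mathfrak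 g_1}=\rho_2(u,D_1(x,y)v)z+\rho_2(\rho_1(z,y)u,v)x-\rho_2(\rho_1(z,x)u,v)y$; $[\rho_2(u,v)x,y,z]_{\mathfrak g_1}=\rho_2(u,\rho_1(y,z)v)x+D_2(v,\rho_1(x,y)u)z-\rho_2(v,\rho_1(x,z)u)y$; $\rho_1(x,y)[u,v,w]_{\mathfrak g_2}=[u,v,\rho_1(x,y)w]_{\mathfrak g_2}-\rho_1(D_2(u,v)x,y)w-\rho_1(x,D_2(u,v)y)w$; $[u,v,\rho_1(x,y)w]_{\mathfrak g_2}=\rho_1(x,D_2(u,v)y)w+\rho_1(\rho_2(w,v)x,y)u-\rho_1(\rho_2(w,u)x,y)v$; $[\rho_1(x,y)u,v,w]_{\mathfrak g_2}=\rho_1(x,\rho_2(v,w)y)u+D_1(y,\rho_2(u,v)x)w-\rho_1(y,\rho_2(u,w)x)v$. A strict twilled Lie triple system structure on $\mathcal G=\mathfrak g_1\oplus\mathfrak g_2$ is a Lie triple system bracket $[\cdot,\cdot,\cdot]_{\mathcal G}$ on $\mathcal G$ for which $\mathfrak g_1$ and $\mathfrak g_2$ are subalgebras and, writing $[a,b,c]_i$ for the $\mathfrak g_i$-component, $[x,y,w]_1=[u,y,z]_1=[x,v,z]_1=0$ and $[u,v,z]_2=[x,v,w]_2=[u,y,w]_2=0$ for all $x,y,z\in\mathfrak g_1,u,v,w\in\mathfrak g_2$ (i.e. the bracket maps tensors with exactly one $\mathfrak g_2$-factor into $\mathfrak g_2$ and with exactly two $\mathfrak g_2$-factors into $\mathfrak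 g_1$; equivalently the component $\hat\psi$ of bidegree $1|1$ vanishes). *)

theory Defs
  imports Main "HOL.Vector_Spaces" "HOL-Library.Product_Plus"
begin

text \<open>Vector spaces over a field 'k of characteristic 0 are given by a scalar
multiplication s on a type with ab_group_add satisfying the library locale
vector_space.  The direct sum g1 (+) g2 is the product type with
componentwise scalar multiplication.\<close>

definition prod_scale :: "('k \<Rightarrow> 'a \<Rightarrow> 'a) \<Rightarrow> ('k \<Rightarrow> 'b \<Rightarrow> 'b) \<Rightarrow> 'k \<Rightarrow> 'a \<times> 'b \<Rightarrow> 'a \<times> 'b"
  where "prod_scale s1 s2 c p = (s1 c (fst p), s2 c (snd p))"

definition trilinear :: "('k::field \<Rightarrow> 'a::ab_group_add \<Rightarrow> 'a) \<Rightarrow> ('a \<Rightarrow> 'a \<Rightarrow> 'a \<Rightarrow> 'a) \<Rightarrow> bool"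
  where "trilinear s br \<longleftrightarrow>
     (\<forall>y z. Vector_Spaces.linear s s (\<lambda>x. br x y z)) \<and>
     (\<forall>x z. Vector_Spaces.linear s s (\<lambda>y. br x y z)) \<and>
     (\<forall>x y. Vector_Spaces.linear s s (\<lambda>z. br x y z))"

definition is_LTS :: "('k::field \<Rightarrow> 'a::ab_group_add \<Rightarrow> 'a) \<Rightarrow> ('a \<Rightarrow> 'a \<Rightarrow> 'a \<Rightarrow> 'a) \<Rightarrow> bool"
  where "is_LTS s br \<longleftrightarrow> trilinear s br \<and>
     (\<forall>x y. br x x y = 0) \<and>
     (\<forall>x y z. br x y z + br y z x + br z x y = 0) \<and>
     (\<forall>x y z w t. br x y (br z w t) =
        br (br x y z) w t + br z (br x y w) t + br z w (br x y t))"

definition Dmap :: "('a \<Rightarrow> 'a \<Rightarrow> 'v \<Rightarrow> 'v::ab_group_add) \<Rightarrow> 'a \<Rightarrow> 'a \<Rightarrow> 'v \<Rightarrow> 'v"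
  where "Dmap \<rho> x y v = \<rho> y x v - \<rho> x y v"

text \<open>Representation of the Lie triple system (g, br) on V: a bilinear map
rho from g (x) g into gl(V), written curried: rho x y is an endomorphism of V.\<close>
definition is_rep :: "('k::field \<Rightarrow> 'a::ab_group_add \<Rightarrow> 'a) \<Rightarrow> ('a \<Rightarrow> 'a \<Rightarrow> 'a \<Rightarrow> 'a)
      \<Rightarrow> ('k \<Rightarrow> 'v::ab_group_add \<Rightarrow> 'v) \<Rightarrow> ('a \<Rightarrow> 'a \<Rightarrow> 'v \<Rightarrow> 'v) \<Rightarrow> bool"
  where "is_rep s br sV \<rho> \<longleftrightarrow>
     (\<forall>x y. Vector_Spaces.linear sV sV (\<rho> x y)) \<and>
     (\<forall>y v. Vector_Spaces.linear s sV (\<lambda>x. \<rho> x y v)) \<and>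
     (\<forall>x v. Vector_Spaces.linear s sV (\<lambda>y. \<rho> x y v)) \<and>
     (\<forall>x y z w v. \<rho> z w (\<rho> x y v) - \<rho> y w (\<rho> x z v) - \<rho> x (br y z w) v
                    + Dmap \<rho> y z (\<rho> x w v) = 0) \<and>
     (\<forall>x y z w v. \<rho> (br x y z) w v + \<rho> z (br x y w) v
                    = Dmap \<rho> x y (\<rho> z w v) - \<rho> z w (Dmap \<rho> x y v))"

type_synonym ('a, 'b) mp_data =
  "('a \<Rightarrow> 'a \<Rightarrow> 'a \<Rightarrow> 'a) \<times> ('b \<Rightarrow> 'b \<Rightarrow> 'b \<Rightarrow> 'b) \<times> ('a \<Rightarrow> 'a \<Rightarrow> 'b \<Rightarrow> 'b) \<times> ('b \<Rightarrow> 'b \<Rightarrow> 'a \<Rightarrow> 'a)"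

definition is_matched_pair ::
  "('k::field \<Rightarrow> 'a::ab_group_add \<Rightarrow> 'a) \<Rightarrow> ('k \<Rightarrow> 'b::ab_group_add \<Rightarrow> 'b) \<Rightarrow> ('a, 'b) mp_data \<Rightarrow> bool"
  where "is_matched_pair s1 s2 m \<longleftrightarrow>
   (case m of (br1, br2, \<rho>1, \<rho>2) \<Rightarrow>
     is_LTS s1 br1 \<and> is_LTS s2 br2 \<and> is_rep s1 br1 s2 \<rho>1 \<and> is_rep s2 br2 s1 \<rho>2 \<and>
     (\<forall>x y z u v.
        \<rho>2 u v (br1 x y z) = br1 x y (\<rho>2 u v z) - \<rho>2 (Dmap \<rho>1 x y u) v z - \<rho>2 u (Dmap \<rho>1 x y v) z) \<and>
     (\<forall>x y z u v.
        br1 x y (\<rho>2 u v z) = \<rho>2 u (Dmap \<rho>1 x y v) z + \<rho>2 (\<rho>1 z y u) v x - \<rho>2 (\<rho>1 z x u) v y) \<and>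
     (\<forall>x y z u v.
        br1 (\<rho>2 u v x) y z = \<rho>2 u (\<rho>1 y z v) x + Dmap \<rho>2 v (\<rho>1 x y u) z - \<rho>2 v (\<rho>1 x z u) y) \<and>
     (\<forall>x y u v w.
        \<rho>1 x y (br2 u v w) = br2 u v (\<rho>1 x y w) - \<rho>1 (Dmap \<rho>2 u v x) y w - \<rho>1 x (Dmap \<rho>2 u v y) w) \<and>
     (\<forall>x y u v w.
        br2 u v (\<rho>1 x y w) = \<rho>1 x (Dmap \<rho>2 u v y) w + \<rho>1 (\<rho>2 w v x) y u - \<rho>1 (\<rho>2 w u x) y v) \<and>
     (\<forall>x y u v w.
        br2 (\<rho>1 x y u) v w = \<rho>1 x (\<rho>2 v w y) u + Dmap \<rho>1 y (\<rho>2 u v x) w - \<rho>1 y (\<rho>2 u w x) v))"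

definition is_strict_twilled ::
  "('k::field \<Rightarrow> 'a::ab_group_add \<Rightarrow> 'a) \<Rightarrow> ('k \<Rightarrow> 'b::ab_group_add \<Rightarrow> 'b)
    \<Rightarrow> ('a \<times> 'b \<Rightarrow> 'a \<times> 'b \<Rightarrow> 'a \<times> 'b \<Rightarrow> 'a \<times> 'b) \<Rightarrow> bool"
  where "is_strict_twilled s1 s2 B \<longleftrightarrow>
     is_LTS (prod_scale s1 s2) B \<and>
     \<comment> \<open>g1 and g2 are subalgebras\<close>
     (\<forall>x y z. snd (B (x,0) (y,0) (z,0)) = 0) \<and>
     (\<forall>u v w. fst (B (0,u) (0,v) (0,w)) = 0) \<and>
     \<comment> \<open>strictness: the 1|1 component vanishes\<close>
     (\<forall>x y w. fst (B (x,0) (y,0) (0,w)) = 0) \<and>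
     (\<forall>u y z. fst (B (0,u) (y,0) (z,0)) = 0) \<and>
     (\<forall>x v z. fst (B (x,0) (0,v) (z,0)) = 0) \<and>
     (\<forall>u v z. snd (B (0,u) (0,v) (z,0)) = 0) \<and>
     (\<forall>x v w. snd (B (x,0) (0,v) (0,w)) = 0) \<and>
     (\<forall>u y w. snd (B (0,u) (y,0) (0,w)) = 0)"

definition bowtie :: "('a::ab_group_add, 'b::ab_group_add) mp_data
    \<Rightarrow> 'a \<times> 'b \<Rightarrow> 'a \<times> 'b \<Rightarrow> 'a \<times> 'b \<Rightarrow> 'a \<times> 'b"
  where "bowtie m p q r = (case m of (br1, br2, \<rho>1, \<rho>2) \<Rightarrow>
     (case p of (x, u) \<Rightarrow> case q of (y, v) \<Rightarrow> case r of (z, w) \<Rightarrow>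
       (br1 x y z + Dmap \<rho>2 u v z + \<rho>2 v w x - \<rho>2 u w y,
        br2 u v w + Dmap \<rho>1 x y w + \<rho>1 y z u - \<rho>1 x z v)))"

definition restrict_data :: "('a::ab_group_add \<times> 'b::ab_group_add \<Rightarrow> 'a \<times> 'b \<Rightarrow> 'a \<times> 'b \<Rightarrow> 'a \<times> 'b)
    \<Rightarrow> ('a, 'b) mp_data"
  where "restrict_data B =
     (\<lambda>x y z. fst (B (x,0) (y,0) (z,0)),
      \<lambda>u v w. snd (B (0,u) (0,v) (0,w)),
      \<lambda>x y u. snd (B (0,u) (x,0) (y,0)),
      \<lambda>u v x. fst (B (x,0) (0,u) (0,v)))"

end

(* Both sides of the correspondence are governed by the same multiplication table.
   A strict twilled bracket B on g1 (+) g2 is trilinear, so it is determined by its values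
   on homogeneous elements; strictness, skew-symmetry and the Jacobi identity force these
   to be the values of the bracket [.,.,.]_bowtie built from the restricted data.
   Conversely, restricting [.,.,.]_bowtie gives back the data it was built from.
   It remains to compare the axioms.  Skew-symmetry and the Jacobi identity of
   [.,.,.]_bowtie reduce to those of [.,.,.]_g1 and [.,.,.]_g2.  Evaluated on homogeneous
   elements, each component of the fundamental identity of [.,.,.]_bowtie is either
   trivial, or one of the identities of a matched pair (the fundamental identities of g1
   and g2, the representation identities for rho1 and rho2, the six compatibility
   conditions), or a consequence of them; hence [.,.,.]_bowtie is a Lie triple system
   exactly when the data form a matched pair. *)

theory Submission
  imports Defs
begin

section \<open>Multilinear data on a direct sum\<close>

definition linear_rep ::
  "('k::field \<Rightarrow> 'a::ab_group_add \<Rightarrow> 'a) \<Rightarrow> ('k \<Rightarrow> 'v::ab_group_add \<Rightarrow> 'v) \<Rightarrow> ('a \<Rightarrow> 'a \<Rightarrow> 'v \<Rightarrow> 'v) \<Rightarrow> bool"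
  where "linear_rep s sV \<rho> \<longleftrightarrow>
    (\<forall>x y. Vector_Spaces.linear sV sV (\<rho> x y)) \<and>
    (\<forall>y v. Vector_Spaces.linear s sV (\<lambda>x. \<rho> x y v)) \<and>
    (\<forall>x v. Vector_Spaces.linear s sV (\<lambda>y. \<rho> x y v))"

definition multilinear_data ::
  "('k::field \<Rightarrow> 'a::ab_group_add \<Rightarrow> 'a) \<Rightarrow> ('k \<Rightarrow> 'b::ab_group_add \<Rightarrow> 'b) \<Rightarrow> ('a, 'b) mp_data \<Rightarrow> bool"
  where "multilinear_data s1 s2 m \<longleftrightarrow> (case m of (b1, b2, r1, r2) \<Rightarrow>
    trilinear s1 b1 \<and> trilinear s2 b2 \<and> linear_rep s1 s2 r1 \<and> linear_rep s2 s1 r2)"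

lemma linear_imp_additive: "Vector_Spaces.linear s1 s2 f \<Longrightarrow> additive f"
  by (simp add: additive_def linear_iff)

lemma alternating_skew:
  fixes br :: "'a::ab_group_add \<Rightarrow> 'a \<Rightarrow> 'c \<Rightarrow> 'd::ab_group_add"
  assumes alternating: "\<And>x z. br x x z = 0"
    and "\<And>y z. additive (\<lambda>x. br x y z)" "\<And>x z. additive (\<lambda>y. br x y z)"
  shows "br y x z = - br x y z"
proof -
  have "0 = br (x + y) (x + y) z" by (simp only: alternating)
  also have "\<dots> = br x y z + br y x z"
    by (simp only: assms(2,3)[THEN additive.add]) (simp add: alternating)
  finally show ?thesis by (metis add.commute eq_neg_iff_add_eq_0)
qed

lemma trilinear_scale:
  assumes "trilinear s br"
  shows "br (s c x) y z = s c (br x y z)" "br x (s c y) z = s c (br x y z)"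
    "br x y (s c z) = s c (br x y z)"
  using assms by (simp_all add: trilinear_def linear_iff)

lemma linear_rep_scale:
  assumes "linear_rep s sV \<rho>"
  shows "\<rho> (s c x) y v = sV c (\<rho> x y v)" "\<rho> x (s c y) v = sV c (\<rho> x y v)"
    "\<rho> x y (sV c v) = sV c (\<rho> x y v)"
  using assms by (simp_all add: linear_rep_def linear_iff)

lemma vector_space_prod_scale:
  assumes "vector_space s1" "vector_space s2"
  shows "vector_space (prod_scale s1 s2)"
  using assms unfolding vector_space_def prod_scale_def by (auto simp: algebra_simps)

lemma linear_restrict:
  assumes "vector_space s1" "vector_space s2"
    and "Vector_Spaces.linear (prod_scale s1 s2) (prod_scale s1 s2) f"
  shows "Vector_Spaces.linear s1 s1 (\<lambda>x. fst (f (x, 0)))"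
    "Vector_Spaces.linear s1 s2 (\<lambda>x. snd (f (x, 0)))"
    "Vector_Spaces.linear s2 s1 (\<lambda>u. fst (f (0, u)))"
    "Vector_Spaces.linear s2 s2 (\<lambda>u. snd (f (0, u)))"
proof -
  have zero: "s1 c 0 = 0" "s2 c 0 = 0" for c
    using assms(1,2) by (simp_all flip: module_iff_vector_space add: module.scale_zero_right)
  have embed: "Vector_Spaces.linear s1 (prod_scale s1 s2) (\<lambda>x. (x, 0))"
      "Vector_Spaces.linear s2 (prod_scale s1 s2) (\<lambda>u. (0, u))"
    and project: "Vector_Spaces.linear (prod_scale s1 s2) s1 fst"
      "Vector_Spaces.linear (prod_scale s1 s2) s2 snd"
    using assms(1,2) vector_space_prod_scale[OF assms(1,2)]
    by (simp_all add: linear_iff prod_scale_def zero)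
  note restrict = Vector_Spaces.linear_compose[OF Vector_Spaces.linear_compose[OF _ assms(3)]]
  show "Vector_Spaces.linear s1 s1 (\<lambda>x. fst (f (x, 0)))"
    "Vector_Spaces.linear s1 s2 (\<lambda>x. snd (f (x, 0)))"
    "Vector_Spaces.linear s2 s1 (\<lambda>u. fst (f (0, u)))"
    "Vector_Spaces.linear s2 s2 (\<lambda>u. snd (f (0, u)))"
    using restrict[OF embed(1) project(1)] restrict[OF embed(1) project(2)]
      restrict[OF embed(2) project(1)] restrict[OF embed(2) project(2)]
    by (simp_all add: comp_def)
qed

lemma multilinear_restrict_data:
  assumes "vector_space s1" "vector_space s2" and "trilinear (prod_scale s1 s2) B"
  shows "multilinear_data s1 s2 (restrict_data B)"
  using assms(3) unfolding multilinear_data_def restrict_data_def trilinear_def linear_rep_def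
  by (auto intro!: linear_restrict[OF assms(1,2)])

section \<open>The bracket of a matched pair\<close>

locale additive_data =
  fixes b1 :: "'a::ab_group_add \<Rightarrow> 'a \<Rightarrow> 'a \<Rightarrow> 'a"
    and b2 :: "'b::ab_group_add \<Rightarrow> 'b \<Rightarrow> 'b \<Rightarrow> 'b"
    and r1 :: "'a \<Rightarrow> 'a \<Rightarrow> 'b \<Rightarrow> 'b"
    and r2 :: "'b \<Rightarrow> 'b \<Rightarrow> 'a \<Rightarrow> 'a"
  assumes b1_additive: "additive (\<lambda>x. b1 x y z)" "additive (\<lambda>y. b1 x y z)" "additive (b1 x y)"
    and b2_additive: "additive (\<lambda>u. b2 u v w)" "additive (\<lambda>v. b2 u v w)" "additive (b2 u v)"
    and r1_additive: "additive (\<lambda>x. r1 x y w)" "additive (\<lambda>y. r1 x y w)" "additive (r1 x y)"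
    and r2_additive: "additive (\<lambda>u. r2 u v z)" "additive (\<lambda>v. r2 u v z)" "additive (r2 u v)"
begin

lemmas multiadditive = b1_additive b2_additive r1_additive r2_additive

lemmas additive_simps [simp] =
  multiadditive[THEN additive.zero] multiadditive[THEN additive.minus]

lemmas additive_expand =
  multiadditive[THEN additive.add] multiadditive[THEN additive.diff]

abbreviation bt :: "'a \<times> 'b \<Rightarrow> 'a \<times> 'b \<Rightarrow> 'a \<times> 'b \<Rightarrow> 'a \<times> 'b"
  where "bt \<equiv> bowtie (b1, b2, r1, r2)"

lemma bowtie_add:
  "bt (p + p') q r = bt p q r + bt p' q r"
  "bt p (q + q') r = bt p q r + bt p q' r"
  "bt p q (r + r') = bt p q r + bt p q r'"
  by (cases p; cases p'; cases q; cases q'; cases r; cases r';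
      simp add: bowtie_def Dmap_def additive_expand algebra_simps)+

lemma bowtie_homogeneous [simp]:
  "bt (x, 0) (y, 0) (z, 0) = (b1 x y z, 0)"
  "bt (x, 0) (y, 0) (0, w) = (0, Dmap r1 x y w)"
  "bt (x, 0) (0, v) (z, 0) = (0, - r1 x z v)"
  "bt (0, u) (y, 0) (z, 0) = (0, r1 y z u)"
  "bt (0, u) (0, v) (0, w) = (0, b2 u v w)"
  "bt (0, u) (0, v) (z, 0) = (Dmap r2 u v z, 0)"
  "bt (0, u) (y, 0) (0, w) = (- r2 u w y, 0)"
  "bt (x, 0) (0, v) (0, w) = (r2 v w x, 0)"
  by (simp_all add: bowtie_def Dmap_def)

lemma restrict_data_bowtie: "restrict_data bt = (b1, b2, r1, r2)"
  by (simp add: restrict_data_def)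

end

lemma multilinear_data_additive:
  "multilinear_data s1 s2 (b1, b2, r1, r2) \<Longrightarrow> additive_data b1 b2 r1 r2"
  unfolding additive_data_def multilinear_data_def trilinear_def linear_rep_def
  by (simp add: additive_def linear_iff)

locale skew_data = additive_data +
  assumes b1_alternating: "b1 x x y = 0" and b1_jacobi: "b1 x y z + b1 y z x + b1 z x y = 0"
    and b2_alternating: "b2 u u v = 0" and b2_jacobi: "b2 u v w + b2 v w u + b2 w u v = 0"
begin

lemma b1_skew: "b1 y x z = - b1 x y z"
  by (rule alternating_skew) (rule b1_alternating b1_additive)+

lemma b2_skew: "b2 v u w = - b2 u v w"
  by (rule alternating_skew) (rule b2_alternating b2_additive)+

lemma bowtie_alternating: "bt p p q = 0"
  by (cases p; cases q) (simp add: bowtie_def Dmap_def zero_prod_def b1_alternating b2_alternating)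

lemma bowtie_jacobi: "bt p q r + bt q r p + bt r p q = 0"
proof (cases p; cases q; cases r)
  fix x u y v z w
  assume "p = (x, u)" "q = (y, v)" "r = (z, w)"
  then show ?thesis
    using b1_jacobi[of x y z] b2_jacobi[of u v w]
    by (simp add: bowtie_def Dmap_def zero_prod_def algebra_simps)
qed

end

locale matched_pair_identities = skew_data +
  assumes b1_fundamental:
      "b1 x y (b1 z x' y') = b1 (b1 x y z) x' y' + b1 z (b1 x y x') y' + b1 z x' (b1 x y y')"
    and b2_fundamental:
      "b2 u v (b2 w u' v') = b2 (b2 u v w) u' v' + b2 w (b2 u v u') v' + b2 w u' (b2 u v v')"
    and r1_rep:
      "r1 z x' (r1 x y u) - r1 y x' (r1 x z u) - r1 x (b1 y z x') u + Dmap r1 y z (r1 x x' u) = 0"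
      "r1 (b1 x y z) x' u + r1 z (b1 x y x') u = Dmap r1 x y (r1 z x' u) - r1 z x' (Dmap r1 x y u)"
    and r2_rep:
      "r2 w u' (r2 u v x) - r2 v u' (r2 u w x) - r2 u (b2 v w u') x + Dmap r2 v w (r2 u u' x) = 0"
      "r2 (b2 u v w) u' x + r2 w (b2 u v u') x = Dmap r2 u v (r2 w u' x) - r2 w u' (Dmap r2 u v x)"
    and compatible:
      "r2 u v (b1 x y z) = b1 x y (r2 u v z) - r2 (Dmap r1 x y u) v z - r2 u (Dmap r1 x y v) z"
      "b1 x y (r2 u v z) = r2 u (Dmap r1 x y v) z + r2 (r1 z y u) v x - r2 (r1 z x u) v y"
      "b1 (r2 u v x) y z = r2 u (r1 y z v) x + Dmap r2 v (r1 x y u) z - r2 v (r1 x z u) y"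
      "r1 x y (b2 u v w) = b2 u v (r1 x y w) - r1 (Dmap r2 u v x) y w - r1 x (Dmap r2 u v y) w"
      "b2 u v (r1 x y w) = r1 x (Dmap r2 u v y) w + r1 (r2 w v x) y u - r1 (r2 w u x) y v"
      "b2 (r1 x y u) v w = r1 x (r2 v w y) u + Dmap r1 y (r2 u v x) w - r1 y (r2 u w x) v"
begin

text \<open>The representation identities solved for the term in which a bracket occurs inside
  \<open>r1\<close> or \<open>r2\<close>.  Together with the compatibility conditions they rewrite both sides
  of each component of the fundamental identity of \<open>bt\<close> to a common normal form.\<close>

lemma r1_bracket_right:
  "r1 x (b1 y z x') u = r1 z x' (r1 x y u) - r1 y x' (r1 x z u) + Dmap r1 y z (r1 x x' u)"
  using r1_rep(1)[of z x' x y u] by (simp add: algebra_simps)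

lemma r1_bracket_left:
  "r1 (b1 x y z) x' u = Dmap r1 x y (r1 z x' u) - r1 z x' (Dmap r1 x y u) - r1 z (b1 x y x') u"
  using r1_rep(2)[of x y z x' u] by (simp add: algebra_simps)

lemma r2_bracket_right:
  "r2 u (b2 v w u') x = r2 w u' (r2 u v x) - r2 v u' (r2 u w x) + Dmap r2 v w (r2 u u' x)"
  using r2_rep(1)[of w u' u v x] by (simp add: algebra_simps)

lemma r2_bracket_left:
  "r2 (b2 u v w) u' x = Dmap r2 u v (r2 w u' x) - r2 w u' (Dmap r2 u v x) - r2 w (b2 u v u') x"
  using r2_rep(2)[of u v w u' x] by (simp add: algebra_simps)

lemma bowtie_fundamental:
  "bt p q (bt r s t) = bt (bt p q r) s t + bt r (bt p q s) t + bt r s (bt p q t)"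
proof -
  obtain x u y v z w x' u' y' v' where
    "p = (x, u)" "q = (y, v)" "r = (z, w)" "s = (x', u')" "t = (y', v')"
    by (metis surj_pair)
  \<comment> \<open>skew-symmetry and the fundamental identities only as instances: in general they loop\<close>
  then show ?thesis
    by (simp add: bowtie_def Dmap_def additive_expand algebra_simps
        r1_bracket_right r1_bracket_left r2_bracket_right r2_bracket_left compatible
        b1_skew[of _ "r2 _ _ _"] b2_skew[of _ "r1 _ _ _"]
        b1_fundamental[of x y z x' y'] b2_fundamental[of u v w u' v'])
qed

end

locale bowtie_lts = skew_data +
  assumes bowtie_fundamental:
    "bt p q (bt r s t) = bt (bt p q r) s t + bt r (bt p q s) t + bt r s (bt p q t)"
begin

text \<open>Each identity is the nontrivial component of the fundamental identity of
  \<open>bt\<close> at the indicated homogeneous arguments.\<close>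

lemma lts_rep_identities:
  "b1 x y (b1 z x' y') = b1 (b1 x y z) x' y' + b1 z (b1 x y x') y' + b1 z x' (b1 x y y')"
  "b2 u v (b2 w u' v') = b2 (b2 u v w) u' v' + b2 w (b2 u v u') v' + b2 w u' (b2 u v v')"
  "r1 z x' (r1 x y u) - r1 y x' (r1 x z u) - r1 x (b1 y z x') u + Dmap r1 y z (r1 x x' u) = 0"
  "r1 (b1 x y z) x' u + r1 z (b1 x y x') u = Dmap r1 x y (r1 z x' u) - r1 z x' (Dmap r1 x y u)"
  "r2 w u' (r2 u v x) - r2 v u' (r2 u w x) - r2 u (b2 v w u') x + Dmap r2 v w (r2 u u' x) = 0"
  "r2 (b2 u v w) u' x + r2 w (b2 u v u') x = Dmap r2 u v (r2 w u' x) - r2 w u' (Dmap r2 u v x)"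
  using bowtie_fundamental[of "(x, 0)" "(y, 0)" "(z, 0)" "(x', 0)" "(y', 0)"]
    bowtie_fundamental[of "(0, u)" "(0, v)" "(0, w)" "(0, u')" "(0, v')"]
    bowtie_fundamental[of "(x, 0)" "(0, u)" "(y, 0)" "(z, 0)" "(x', 0)"]
    bowtie_fundamental[of "(x, 0)" "(y, 0)" "(z, 0)" "(0, u)" "(x', 0)"]
    bowtie_fundamental[of "(0, u)" "(x, 0)" "(0, v)" "(0, w)" "(0, u')"]
    bowtie_fundamental[of "(0, u)" "(0, v)" "(0, w)" "(x, 0)" "(0, u')"]
  by (simp_all add: Dmap_def additive_expand algebra_simps)

lemma compatibility_identities:
  "r2 u v (b1 x y z) = b1 x y (r2 u v z) - r2 (Dmap r1 x y u) v z - r2 u (Dmap r1 x y v) z"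
  "b1 x y (r2 u v z) = r2 u (Dmap r1 x y v) z + r2 (r1 z y u) v x - r2 (r1 z x u) v y"
  "b1 (r2 u v x) y z = r2 u (r1 y z v) x + Dmap r2 v (r1 x y u) z - r2 v (r1 x z u) y"
  "r1 x y (b2 u v w) = b2 u v (r1 x y w) - r1 (Dmap r2 u v x) y w - r1 x (Dmap r2 u v y) w"
  "b2 u v (r1 x y w) = r1 x (Dmap r2 u v y) w + r1 (r2 w v x) y u - r1 (r2 w u x) y v"
  "b2 (r1 x y u) v w = r1 x (r2 v w y) u + Dmap r1 y (r2 u v x) w - r1 y (r2 u w x) v"
  using bowtie_fundamental[of "(x, 0)" "(y, 0)" "(z, 0)" "(0, u)" "(0, v)"]
    bowtie_fundamental[of "(z, 0)" "(0, u)" "(x, 0)" "(y, 0)" "(0, v)"]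
    bowtie_fundamental[of "(x, 0)" "(0, u)" "(0, v)" "(y, 0)" "(z, 0)"]
    bowtie_fundamental[of "(0, u)" "(0, v)" "(x, 0)" "(0, w)" "(y, 0)"]
    bowtie_fundamental[of "(x, 0)" "(0, w)" "(0, u)" "(0, v)" "(y, 0)"]
    bowtie_fundamental[of "(x, 0)" "(0, u)" "(y, 0)" "(0, v)" "(0, w)"]
  by (simp_all add: Dmap_def additive_expand algebra_simps)

lemma matched_pair_identities: "matched_pair_identities b1 b2 r1 r2"
  by unfold_locales (rule lts_rep_identities compatibility_identities)+

end

lemma is_matched_pair_iff:
  "is_matched_pair s1 s2 (b1, b2, r1, r2) \<longleftrightarrow>
    multilinear_data s1 s2 (b1, b2, r1, r2) \<and> matched_pair_identities b1 b2 r1 r2"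
proof
  assume mp: "is_matched_pair s1 s2 (b1, b2, r1, r2)"
  then have ml: "multilinear_data s1 s2 (b1, b2, r1, r2)"
    by (simp add: is_matched_pair_def is_LTS_def is_rep_def multilinear_data_def linear_rep_def)
  interpret additive_data b1 b2 r1 r2
    using ml by (rule multilinear_data_additive)
  have "matched_pair_identities b1 b2 r1 r2"
    using mp unfolding is_matched_pair_def is_LTS_def is_rep_def prod.case
    by unfold_locales fast+
  with ml show "multilinear_data s1 s2 (b1, b2, r1, r2) \<and> matched_pair_identities b1 b2 r1 r2" ..
next
  assume "multilinear_data s1 s2 (b1, b2, r1, r2) \<and> matched_pair_identities b1 b2 r1 r2"
  then obtain ml: "multilinear_data s1 s2 (b1, b2, r1, r2)"
    and identities: "matched_pair_identities b1 b2 r1 r2" ..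
  interpret matched_pair_identities b1 b2 r1 r2 by (fact identities)
  show "is_matched_pair s1 s2 (b1, b2, r1, r2)"
    using ml unfolding is_matched_pair_def is_LTS_def is_rep_def multilinear_data_def linear_rep_def prod.case
    by (blast intro: b1_alternating b1_jacobi b2_alternating b2_jacobi b1_fundamental b2_fundamental
        r1_rep r2_rep compatible)
qed

lemma trilinear_bowtie:
  assumes "multilinear_data s1 s2 (b1, b2, r1, r2)"
  shows "trilinear (prod_scale s1 s2) (bowtie (b1, b2, r1, r2))"
proof -
  interpret additive_data b1 b2 r1 r2
    using assms by (rule multilinear_data_additive)
  have tri: "trilinear s1 b1" "trilinear s2 b2" and rep: "linear_rep s1 s2 r1" "linear_rep s2 s1 r2"
    using assms by (simp_all add: multilinear_data_def)
  then have vs: "vector_space s1" "vector_space s2"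
    by (auto simp: trilinear_def linear_iff)
  then have "module s1" "module s2"
    by (simp_all add: module_iff_vector_space)
  note scale = trilinear_scale[OF tri(1)] trilinear_scale[OF tri(2)]
    linear_rep_scale[OF rep(1)] linear_rep_scale[OF rep(2)]
    module.scale_right_distrib[OF \<open>module s1\<close>] module.scale_right_diff_distrib[OF \<open>module s1\<close>]
    module.scale_right_distrib[OF \<open>module s2\<close>] module.scale_right_diff_distrib[OF \<open>module s2\<close>]
  have "bt (prod_scale s1 s2 c p) q r = prod_scale s1 s2 c (bt p q r)"
    "bt p (prod_scale s1 s2 c q) r = prod_scale s1 s2 c (bt p q r)"
    "bt p q (prod_scale s1 s2 c r) = prod_scale s1 s2 c (bt p q r)" for c p q r
    by (cases p; cases q; cases r; simp add: bowtie_def Dmap_def prod_scale_def scale)+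
  then show ?thesis
    unfolding trilinear_def linear_iff
    using vector_space_prod_scale[OF vs] bowtie_add by simp
qed

lemma strict_twilled_bowtie:
  assumes "is_matched_pair s1 s2 m"
  shows "is_strict_twilled s1 s2 (bowtie m)" and "restrict_data (bowtie m) = m"
proof -
  obtain b1 b2 r1 r2 where m: "m = (b1, b2, r1, r2)"
    using prod_cases4 by blast
  with assms have ml: "multilinear_data s1 s2 (b1, b2, r1, r2)"
    and identities: "matched_pair_identities b1 b2 r1 r2"
    by (simp_all add: is_matched_pair_iff)
  interpret matched_pair_identities b1 b2 r1 r2
    by (fact identities)
  have "is_LTS (prod_scale s1 s2) bt"
    unfolding is_LTS_def
    using trilinear_bowtie[OF ml] bowtie_alternating bowtie_jacobi bowtie_fundamental by blast
  then show "is_strict_twilled s1 s2 (bowtie m)"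
    by (simp add: m is_strict_twilled_def)
  show "restrict_data (bowtie m) = m"
    by (simp add: m restrict_data_bowtie)
qed

section \<open>Strict twilled Lie triple systems\<close>

locale strict_twilled =
  fixes s1 :: "'k::field \<Rightarrow> 'a::ab_group_add \<Rightarrow> 'a" and s2 :: "'k \<Rightarrow> 'b::ab_group_add \<Rightarrow> 'b"
    and B :: "'a \<times> 'b \<Rightarrow> 'a \<times> 'b \<Rightarrow> 'a \<times> 'b \<Rightarrow> 'a \<times> 'b"
  assumes vs1: "vector_space s1" and vs2: "vector_space s2"
    and strict_twilled: "is_strict_twilled s1 s2 B"
begin

lemma B_lts: "is_LTS (prod_scale s1 s2) B"
  using strict_twilled by (simp add: is_strict_twilled_def)

lemma B_trilinear: "trilinear (prod_scale s1 s2) B"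
  using B_lts by (simp add: is_LTS_def)

lemma B_additive: "additive (\<lambda>p. B p q r)" "additive (\<lambda>q. B p q r)" "additive (B p q)"
  using B_trilinear unfolding trilinear_def by (blast intro: linear_imp_additive)+

lemmas B_add = B_additive[THEN additive.add]

lemma B_alternating: "B p p q = 0"
  and B_jacobi: "B p q r + B q r p + B r p q = 0"
  and B_fundamental: "B p q (B r s t) = B (B p q r) s t + B r (B p q s) t + B r s (B p q t)"
  using B_lts unfolding is_LTS_def by blast+

lemma B_skew: "B q p r = - B p q r"
  by (rule alternating_skew) (rule B_alternating B_additive)+

lemma B_cyclic: "B p q r = B r q p - B r p q"
  using B_jacobi[of p q r] B_skew[of q r p] by (simp add: eq_neg_iff_add_eq_0 algebra_simps)

lemma B_strict:
  "snd (B (x,0) (y,0) (z,0)) = 0" "fst (B (0,u) (0,v) (0,w)) = 0"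
  "fst (B (x,0) (y,0) (0,w)) = 0" "fst (B (0,u) (y,0) (z,0)) = 0" "fst (B (x,0) (0,v) (z,0)) = 0"
  "snd (B (0,u) (0,v) (z,0)) = 0" "snd (B (x,0) (0,v) (0,w)) = 0" "snd (B (0,u) (y,0) (0,w)) = 0"
  using strict_twilled unfolding is_strict_twilled_def by simp_all

definition b1 :: "'a \<Rightarrow> 'a \<Rightarrow> 'a \<Rightarrow> 'a"
  where "b1 x y z = fst (B (x, 0) (y, 0) (z, 0))"
definition b2 :: "'b \<Rightarrow> 'b \<Rightarrow> 'b \<Rightarrow> 'b"
  where "b2 u v w = snd (B (0, u) (0, v) (0, w))"
definition r1 :: "'a \<Rightarrow> 'a \<Rightarrow> 'b \<Rightarrow> 'b"
  where "r1 x y u = snd (B (0, u) (x, 0) (y, 0))"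
definition r2 :: "'b \<Rightarrow> 'b \<Rightarrow> 'a \<Rightarrow> 'a"
  where "r2 u v x = fst (B (x, 0) (0, u) (0, v))"

lemma restrict_data_eq: "restrict_data B = (b1, b2, r1, r2)"
  by (simp add: restrict_data_def b1_def b2_def r1_def r2_def fun_eq_iff)

lemma multilinear_restrict: "multilinear_data s1 s2 (b1, b2, r1, r2)"
  using multilinear_restrict_data[OF vs1 vs2 B_trilinear] restrict_data_eq by simp

sublocale restricted: skew_data b1 b2 r1 r2
proof -
  interpret additive_data b1 b2 r1 r2
    using multilinear_restrict by (rule multilinear_data_additive)
  show "skew_data b1 b2 r1 r2"
  proof
    show "b1 x x y = 0" "b2 u u v = 0" for x y u v
      by (simp_all add: b1_def b2_def B_alternating)
    show "b1 x y z + b1 y z x + b1 z x y = 0" for x y z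
      using B_jacobi[of "(x, 0)" "(y, 0)" "(z, 0)"] unfolding b1_def by (metis fst_add fst_zero)
    show "b2 u v w + b2 v w u + b2 w u v = 0" for u v w
      using B_jacobi[of "(0, u)" "(0, v)" "(0, w)"] unfolding b2_def by (metis snd_add snd_zero)
  qed
qed

lemma B_mixed_reorder:
  "B (x, 0) (y, 0) (0, w) = B (0, w) (y, 0) (x, 0) - B (0, w) (x, 0) (y, 0)"
  "B (x, 0) (0, v) (z, 0) = - B (0, v) (x, 0) (z, 0)"
  "B (0, u) (0, v) (z, 0) = B (z, 0) (0, v) (0, u) - B (z, 0) (0, u) (0, v)"
  "B (0, u) (y, 0) (0, w) = - B (y, 0) (0, u) (0, w)"
  by (rule B_cyclic B_skew)+

lemma B_homogeneous:
  "B (x, 0) (y, 0) (z, 0) = (b1 x y z, 0)"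
  "B (x, 0) (y, 0) (0, w) = (0, Dmap r1 x y w)"
  "B (x, 0) (0, v) (z, 0) = (0, - r1 x z v)"
  "B (0, u) (y, 0) (z, 0) = (0, r1 y z u)"
  "B (0, u) (0, v) (0, w) = (0, b2 u v w)"
  "B (0, u) (0, v) (z, 0) = (Dmap r2 u v z, 0)"
  "B (0, u) (y, 0) (0, w) = (- r2 u w y, 0)"
  "B (x, 0) (0, v) (0, w) = (r2 v w x, 0)"
  by (simp_all add: B_mixed_reorder prod_eq_iff B_strict b1_def b2_def r1_def r2_def Dmap_def)

lemma bowtie_restricted: "bowtie (b1, b2, r1, r2) = B"
proof (intro ext)
  fix p q r :: "'a \<times> 'b"
  obtain x u y v z w where "p = (x, 0) + (0, u)" "q = (y, 0) + (0, v)" "r = (z, 0) + (0, w)"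
    by (metis add_Pair add.left_neutral add.right_neutral surj_pair)
  then show "bowtie (b1, b2, r1, r2) p q r = B p q r"
    by (simp only: restricted.bowtie_add B_add restricted.bowtie_homogeneous B_homogeneous)
qed

sublocale restricted: bowtie_lts b1 b2 r1 r2
  by unfold_locales (unfold bowtie_restricted, rule B_fundamental)

lemma bowtie_restrict: "bowtie (restrict_data B) = B"
  by (simp add: restrict_data_eq bowtie_restricted)

lemma matched_pair_restrict: "is_matched_pair s1 s2 (restrict_data B)"
  using multilinear_restrict restricted.matched_pair_identities
  by (simp add: restrict_data_eq is_matched_pair_iff)

end

theorem theorem5p4:
  fixes s1 :: "'k::field_char_0 \<Rightarrow> 'a::ab_group_add \<Rightarrow> 'a"
    and s2 :: "'k \<Rightarrow> 'b::ab_group_add \<Rightarrow> 'b"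
  assumes "vector_space s1" and "vector_space s2"
  shows "bij_betw bowtie {m. is_matched_pair s1 s2 m} {B. is_strict_twilled s1 s2 B}
    \<and> (\<forall>m. is_matched_pair s1 s2 m \<longrightarrow> restrict_data (bowtie m) = m)
    \<and> (\<forall>B. is_strict_twilled s1 s2 B \<longrightarrow> is_matched_pair s1 s2 (restrict_data B)
                                       \<and> bowtie (restrict_data B) = B)"
proof -
  have restrict: "is_matched_pair s1 s2 (restrict_data B)" "bowtie (restrict_data B) = B"
    if "is_strict_twilled s1 s2 B" for B
  proof -
    interpret strict_twilled s1 s2 B
      using assms that by (rule strict_twilled.intro)
    show "is_matched_pair s1 s2 (restrict_data B)" "bowtie (restrict_data B) = B"
      by (rule matched_pair_restrict bowtie_restrict)+
  qed
  have "bij_betw bowtie {m. is_matched_pair s1 s2 m} {B. is_strict_twilled s1 s2 B}"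
    by (rule bij_betw_byWitness[where f' = restrict_data])
      (auto simp: strict_twilled_bowtie restrict)
  then show ?thesis
    using strict_twilled_bowtie(2) restrict by blast
qed

end
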